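(* Let $k\geq 3$, $0\leq\epsilon\leq\frac12$ and $0<c<1$. Let \[ r=\frac{1}{\max\{4\epsilon(1-\epsilon),\ \epsilon^2+(1-\epsilon)^2\}}\cdot\frac{c}{\binom{k}{2}}, \] and let $\Phi$ be a random instance of $\epsilon$-1-in-$k$ SAT on $n$ variables drawn from the constant probability model with parameter $p=p(n)$ satisfying $p\binom{n}{k}=rn$. For each $n$ let $(A_n,B_n)\in\{0,1\}^n\times\{0,1\}^n$ be a pair of assignments satisfying \[ 2\cdot\big[\mathrm{overlap}(A_n,B_n)\,(1-\epsilon)\big]^{k-2}\leq 1 . \] Then there exists $\lambda_{c,\epsilon}>0$ such that for all sufficiently large $n$, \[ \Pr\big[(A_n,B_n)\text{ is not }\lambda_{c,\epsilon}\log n\text{-connected}\ \big|\ A_n\models\Phi\text{ and }B_n\models\Phi\big]<\frac1n . \]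
   Context: Let $\epsilon\in[0,1/2]$. An instance of $\epsilon$-1-in-$k$ SAT on variables $x_1,\dots,x_n$ is a conjunction of clauses, each consisting of exactly $k$ literals on $k$ distinct variables; an assignment $A\in\{0,1\}^n$ satisfies it ($A\models\Phi$) if in every clause exactly one literal is true. In the constant probability model with parameter $p$, each of the possible clauses (a set of $k$ distinct variables with a sign for each) that has $i$ negated and $j$ unnegated literals ($i+j=k$) is included independently with probability $p\,\epsilon^{i}(1-\epsilon)^{j}$. The overlap of two assignments $A,B$ is $\mathrm{overlap}(A,B)=|\{i: A(x_i)=B(x_i)\}|/n$. For an integer $l\geq1$, two satisfying assignments $A,B$ of $\Phi$ are $l$-connected if there is a sequence of satisfying assignments $A_0=A,\dots,A_r=B$ of $\Phi$ with consecutive ones at Hamming distance at most $l$. *)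

theory Defs
  imports Complex_Main
begin

text \<open>Variables are the naturals 0..n-1. A literal is a pair (i, b): b = True means the
  unnegated literal x_i, b = False the negated literal. A clause is a set of k literals on
  k distinct variables.\<close>

definition clauses :: "nat \<Rightarrow> nat \<Rightarrow> (nat \<times> bool) set set" where
  "clauses n k = {C. C \<subseteq> {0..<n} \<times> UNIV \<and> card C = k \<and> inj_on fst C}"

definition assignments :: "nat \<Rightarrow> (nat \<Rightarrow> bool) set" where
  "assignments n = {A. \<forall>i\<ge>n. \<not> A i}"

definition lit_true :: "(nat \<Rightarrow> bool) \<Rightarrow> nat \<times> bool \<Rightarrow> bool" where
  "lit_true A l = (A (fst l) = snd l)"

definition sat :: "(nat \<Rightarrow> bool) \<Rightarrow> (nat \<times> bool) set set \<Rightarrow> bool" where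
  "sat A \<Phi> = (\<forall>C\<in>\<Phi>. card {l\<in>C. lit_true A l} = 1)"

definition clause_prob :: "real \<Rightarrow> real \<Rightarrow> (nat \<times> bool) set \<Rightarrow> real" where
  "clause_prob p \<epsilon> C = p * \<epsilon> ^ card {l\<in>C. \<not> snd l} * (1 - \<epsilon>) ^ card {l\<in>C. snd l}"

definition instance_prob :: "nat \<Rightarrow> nat \<Rightarrow> real \<Rightarrow> real \<Rightarrow> (nat \<times> bool) set set \<Rightarrow> real" where
  "instance_prob n k p \<epsilon> \<Phi> =
     (\<Prod>C\<in>\<Phi>. clause_prob p \<epsilon> C) * (\<Prod>C\<in>clauses n k - \<Phi>. 1 - clause_prob p \<epsilon> C)"

definition prob_inst :: "nat \<Rightarrow> nat \<Rightarrow> real \<Rightarrow> real \<Rightarrow> ((nat \<times> bool) set set \<Rightarrow> bool) \<Rightarrow> real" where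
  "prob_inst n k p \<epsilon> E = (\<Sum>\<Phi>\<in>{\<Phi>. \<Phi> \<subseteq> clauses n k \<and> E \<Phi>}. instance_prob n k p \<epsilon> \<Phi>)"

definition cond_prob_inst :: "nat \<Rightarrow> nat \<Rightarrow> real \<Rightarrow> real \<Rightarrow> ((nat \<times> bool) set set \<Rightarrow> bool)
    \<Rightarrow> ((nat \<times> bool) set set \<Rightarrow> bool) \<Rightarrow> real" where
  "cond_prob_inst n k p \<epsilon> E F = prob_inst n k p \<epsilon> (\<lambda>\<Phi>. E \<Phi> \<and> F \<Phi>) / prob_inst n k p \<epsilon> F"

definition hamming :: "nat \<Rightarrow> (nat \<Rightarrow> bool) \<Rightarrow> (nat \<Rightarrow> bool) \<Rightarrow> nat" where
  "hamming n A B = card {i. i < n \<and> A i \<noteq> B i}"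

definition overlap :: "nat \<Rightarrow> (nat \<Rightarrow> bool) \<Rightarrow> (nat \<Rightarrow> bool) \<Rightarrow> real" where
  "overlap n A B = real (card {i. i < n \<and> A i = B i}) / real n"

definition connected :: "nat \<Rightarrow> (nat \<times> bool) set set \<Rightarrow> real \<Rightarrow> (nat \<Rightarrow> bool) \<Rightarrow> (nat \<Rightarrow> bool) \<Rightarrow> bool" where
  "connected n \<Phi> l A B =
     (\<exists>xs. xs \<noteq> [] \<and> hd xs = A \<and> last xs = B \<and>
        (\<forall>X\<in>set xs. X \<in> assignments n \<and> sat X \<Phi>) \<and>
        (\<forall>i < length xs - 1. real (hamming n (xs ! i) (xs ! Suc i)) \<le> l))"

end

theory Submission
  imports Defs
begin

text \<open>
  Condition on A and B being solutions. Then the instance consists exactly of the clauses that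
  are 1-in-k satisfied by both (both_sat), each present independently. Let D be the set of
  variables on which A and B differ, and consider the graph on D joining two variables that
  share a clause. Flipping A to B on a connected component keeps every clause satisfied, so if
  all components have at most l vertices, A and B are l-connected (connected_if_small_components).

  A clause of both_sat meets D in at most two variables, and the overlap condition together with
  the choice of r makes the expected D-degree of every vertex at most \<mu> = (1+c)/2 < 1
  (subcritical_both_sat). An exploration argument then bounds the exponential moment of a
  component, E[x^|component|] \<le> G for suitable x > 1, G (reach_moment). By Markov's inequality
  and a union bound over D, components of size above (3 / ln x) ln n occur with probability at
  most n G / n^3 < 1/n.
\<close>

definition indep_wt :: "('c \<Rightarrow> real) \<Rightarrow> 'c set \<Rightarrow> 'c set \<Rightarrow> real" where
  "indep_wt q Y \<Phi> = (\<Prod>C\<in>\<Phi>. q C) * (\<Prod>C\<in>Y - \<Phi>. 1 - q C)"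

lemma indep_wt_total: "finite Y \<Longrightarrow> (\<Sum>\<Phi>\<in>Pow Y. indep_wt q Y \<Phi>) = 1"
  using prod_add[of Y q "\<lambda>C. 1 - q C"] by (simp add: indep_wt_def)

lemma indep_wt_nonneg:
  "(\<And>C. C \<in> Y \<Longrightarrow> 0 \<le> q C \<and> q C \<le> 1) \<Longrightarrow> \<Phi> \<subseteq> Y \<Longrightarrow> 0 \<le> indep_wt q Y \<Phi>"
  unfolding indep_wt_def by (intro mult_nonneg_nonneg prod_nonneg) auto

lemma indep_wt_union:
  assumes "Y1 \<inter> Y2 = {}" "\<Phi>1 \<subseteq> Y1" "\<Phi>2 \<subseteq> Y2" "finite Y1" "finite Y2"
  shows "indep_wt q (Y1 \<union> Y2) (\<Phi>1 \<union> \<Phi>2) = indep_wt q Y1 \<Phi>1 * indep_wt q Y2 \<Phi>2"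
proof -
  have fin: "finite \<Phi>1" "finite \<Phi>2" using assms by (auto intro: finite_subset)
  have diff: "(Y1 \<union> Y2) - (\<Phi>1 \<union> \<Phi>2) = (Y1 - \<Phi>1) \<union> (Y2 - \<Phi>2)" using assms by auto
  have "(\<Prod>C\<in>\<Phi>1 \<union> \<Phi>2. q C) = (\<Prod>C\<in>\<Phi>1. q C) * (\<Prod>C\<in>\<Phi>2. q C)"
    using fin assms by (intro prod.union_disjoint) auto
  moreover have "(\<Prod>C\<in>(Y1 - \<Phi>1) \<union> (Y2 - \<Phi>2). 1 - q C)
      = (\<Prod>C\<in>Y1 - \<Phi>1. 1 - q C) * (\<Prod>C\<in>Y2 - \<Phi>2. 1 - q C)"
    using assms by (intro prod.union_disjoint) auto
  ultimately show ?thesis unfolding indep_wt_def diff by (simp add: algebra_simps)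
qed

lemma Pow_Un_bij:
  assumes "Y1 \<inter> Y2 = {}"
  shows "bij_betw (\<lambda>(a, b). a \<union> b) (Pow Y1 \<times> Pow Y2) (Pow (Y1 \<union> Y2))"
proof (rule bij_betw_imageI)
  show "inj_on (\<lambda>(a, b). a \<union> b) (Pow Y1 \<times> Pow Y2)"
  proof (rule inj_onI, clarify)
    fix a b a' b' assume h: "a \<subseteq> Y1" "b \<subseteq> Y2" "a' \<subseteq> Y1" "b' \<subseteq> Y2" "a \<union> b = a' \<union> b'"
    have "a = (a \<union> b) \<inter> Y1" "a' = (a' \<union> b') \<inter> Y1" "b = (a \<union> b) \<inter> Y2" "b' = (a' \<union> b') \<inter> Y2"
      using h assms by auto
    then show "a = a' \<and> b = b'" using h(5) by metis
  qed
  show "(\<lambda>(a, b). a \<union> b) ` (Pow Y1 \<times> Pow Y2) = Pow (Y1 \<union> Y2)"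
  proof
    show "(\<lambda>(a, b). a \<union> b) ` (Pow Y1 \<times> Pow Y2) \<subseteq> Pow (Y1 \<union> Y2)" by auto
    show "Pow (Y1 \<union> Y2) \<subseteq> (\<lambda>(a, b). a \<union> b) ` (Pow Y1 \<times> Pow Y2)"
    proof
      fix X assume "X \<in> Pow (Y1 \<union> Y2)"
      then have "X = (\<lambda>(a, b). a \<union> b) (X \<inter> Y1, X \<inter> Y2)" "(X \<inter> Y1, X \<inter> Y2) \<in> Pow Y1 \<times> Pow Y2"
        by auto
      then show "X \<in> (\<lambda>(a, b). a \<union> b) ` (Pow Y1 \<times> Pow Y2)" by blast
    qed
  qed
qed

lemma indep_wt_split:
  assumes "Y1 \<inter> Y2 = {}" "finite Y1" "finite Y2"
  shows "(\<Sum>\<Phi>\<in>Pow (Y1 \<union> Y2). indep_wt q (Y1 \<union> Y2) \<Phi> * f \<Phi>) =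
         (\<Sum>\<Phi>1\<in>Pow Y1. indep_wt q Y1 \<Phi>1 * (\<Sum>\<Phi>2\<in>Pow Y2. indep_wt q Y2 \<Phi>2 * f (\<Phi>1 \<union> \<Phi>2)))"
proof -
  have "(\<Sum>\<Phi>\<in>Pow (Y1 \<union> Y2). indep_wt q (Y1 \<union> Y2) \<Phi> * f \<Phi>) =
        (\<Sum>(a, b)\<in>Pow Y1 \<times> Pow Y2. indep_wt q (Y1 \<union> Y2) (a \<union> b) * f (a \<union> b))"
    using sum.reindex_bij_betw[OF Pow_Un_bij[OF assms(1)], of "\<lambda>\<Phi>. indep_wt q (Y1 \<union> Y2) \<Phi> * f \<Phi>"]
    by (simp add: case_prod_unfold)
  also have "\<dots> = (\<Sum>(a, b)\<in>Pow Y1 \<times> Pow Y2. indep_wt q Y1 a * (indep_wt q Y2 b * f (a \<union> b)))"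
    using assms by (intro sum.cong refl) (auto simp: indep_wt_union)
  also have "\<dots> = (\<Sum>\<Phi>1\<in>Pow Y1. indep_wt q Y1 \<Phi>1 *
                    (\<Sum>\<Phi>2\<in>Pow Y2. indep_wt q Y2 \<Phi>2 * f (\<Phi>1 \<union> \<Phi>2)))"
    by (simp add: sum.cartesian_product[symmetric] sum_distrib_left)
  finally show ?thesis .
qed

lemma indep_wt_pgf:
  assumes "finite Y" "Z \<subseteq> Y"
  shows "(\<Sum>\<Phi>\<in>Pow Y. indep_wt q Y \<Phi> * g ^ card (\<Phi> \<inter> Z)) = (\<Prod>C\<in>Z. 1 + q C * (g - 1))"
proof -
  define h where "h C = (if C \<in> Z then g else 1)" for C
  have "(\<Sum>\<Phi>\<in>Pow Y. indep_wt q Y \<Phi> * g ^ card (\<Phi> \<inter> Z))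
      = (\<Sum>X\<in>Pow Y. (\<Prod>C\<in>X. q C * h C) * (\<Prod>C\<in>Y - X. 1 - q C))"
  proof (intro sum.cong refl)
    fix X assume "X \<in> Pow Y"
    then have "finite X" using assms finite_subset by auto
    then have "(\<Prod>C\<in>X. h C) = g ^ card (X \<inter> Z)" unfolding h_def by (simp add: prod.If_cases)
    then show "indep_wt q Y X * g ^ card (X \<inter> Z) = (\<Prod>C\<in>X. q C * h C) * (\<Prod>C\<in>Y - X. 1 - q C)"
      unfolding indep_wt_def by (simp add: prod.distrib)
  qed
  also have "\<dots> = (\<Prod>C\<in>Y. q C * h C + (1 - q C))"
    by (rule prod_add[OF assms(1), symmetric])
  also have "\<dots> = (\<Prod>C\<in>Z. q C * h C + (1 - q C)) * (\<Prod>C\<in>Y - Z. q C * h C + (1 - q C))"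
    using prod.subset_diff[OF assms(2) assms(1)] by (simp add: mult.commute)
  also have "\<dots> = (\<Prod>C\<in>Z. 1 + q C * (g - 1))"
    unfolding h_def by (simp add: algebra_simps)
  finally show ?thesis .
qed

text \<open>Its exponential upper bound, from 1 + t \<le> e^t.\<close>
lemma prod_one_plus_le_exp:
  fixes q :: "'a \<Rightarrow> real"
  assumes "finite Z" "\<And>C. C \<in> Z \<Longrightarrow> 0 \<le> q C" "g \<ge> 1"
  shows "(\<Prod>C\<in>Z. 1 + q C * (g - 1)) \<le> exp ((g - 1) * (\<Sum>C\<in>Z. q C))"
proof -
  have "(\<Prod>C\<in>Z. 1 + q C * (g - 1)) \<le> (\<Prod>C\<in>Z. exp (q C * (g - 1)))"
    using assms by (intro prod_mono) (auto simp: add_increasing)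
  also have "\<dots> = exp (\<Sum>C\<in>Z. q C * (g - 1))" using assms(1) by (simp add: exp_sum)
  finally show ?thesis by (simp add: sum_distrib_left mult.commute)
qed

definition adj :: "('v \<times> 'b) set set \<Rightarrow> 'v \<Rightarrow> 'v \<Rightarrow> bool" where
  "adj \<Phi> a b \<longleftrightarrow> a \<noteq> b \<and> (\<exists>C\<in>\<Phi>. a \<in> fst ` C \<and> b \<in> fst ` C)"

definition adj_in :: "('v \<times> 'b) set set \<Rightarrow> 'v set \<Rightarrow> 'v \<Rightarrow> 'v \<Rightarrow> bool" where
  "adj_in \<Phi> S a b \<longleftrightarrow> a \<in> S \<and> b \<in> S \<and> adj \<Phi> a b"

definition reach :: "('v \<times> 'b) set set \<Rightarrow> 'v set \<Rightarrow> 'v set \<Rightarrow> 'v set" where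
  "reach \<Phi> S U = {w. \<exists>u\<in>U. (adj_in \<Phi> S)\<^sup>*\<^sup>* u w}"

lemma adj_sym: "adj \<Phi> a b \<Longrightarrow> adj \<Phi> b a"
  unfolding adj_def by blast

lemma adj_in_star_mem: "(adj_in \<Phi> S)\<^sup>*\<^sup>* u w \<Longrightarrow> w = u \<or> w \<in> S"
  by (induction rule: rtranclp_induct) (auto simp: adj_in_def)

lemma reach_subset: "reach \<Phi> S U \<subseteq> U \<union> S"
  unfolding reach_def by (blast dest: adj_in_star_mem)

lemma reach_empty [simp]: "reach \<Phi> S {} = {}"
  unfolding reach_def by auto

lemma reach_cong:
  assumes "\<And>a b. a \<in> S \<Longrightarrow> b \<in> S \<Longrightarrow> adj \<Phi> a b = adj \<Phi>' a b"
  shows "reach \<Phi> S W = reach \<Phi>' S W"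
proof -
  have "adj_in \<Phi> S = adj_in \<Phi>' S" using assms by (auto simp: adj_in_def fun_eq_iff)
  then show ?thesis by (simp add: reach_def)
qed

text \<open>The two inclusions are proved
  separately: a path from U either stays away from u or can be restarted at a neighbour of u;
  conversely paths avoiding u are paths.\<close>
lemma reach_unfold_subset:
  assumes u: "u \<in> U"
  shows "reach \<Phi> S U \<subseteq> insert u (reach \<Phi> (S - {u}) ((U - {u}) \<union> {w\<in>S - {u}. adj \<Phi> u w}))"
    (is "_ \<subseteq> insert u (reach \<Phi> ?S' ?W)")
proof
  fix w assume "w \<in> reach \<Phi> S U"
  then obtain u0 where u0: "u0 \<in> U" "(adj_in \<Phi> S)\<^sup>*\<^sup>* u0 w" unfolding reach_def by blast
  from u0(2) show "w \<in> insert u (reach \<Phi> ?S' ?W)"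
  proof (induction rule: rtranclp_induct)
    case base
    then show ?case using u0(1) by (cases "u0 = u") (auto simp: reach_def)
  next
    case (step y z)
    consider "z = u" | "z \<noteq> u" "y = u" | "z \<noteq> u" "y \<noteq> u" by blast
    then show ?case
    proof cases
      case 2
      then have "z \<in> ?W" using step(2) by (auto simp: adj_in_def)
      then show ?thesis by (auto simp: reach_def)
    next
      case 3
      with step(3) obtain u1 where "u1 \<in> ?W" "(adj_in \<Phi> ?S')\<^sup>*\<^sup>* u1 y" by (auto simp: reach_def)
      moreover have "adj_in \<Phi> ?S' y z" using step(2) 3 by (auto simp: adj_in_def)
      ultimately show ?thesis by (auto simp: reach_def intro: rtranclp.rtrancl_into_rtrancl)
    qed simp
  qed
qed

lemma reach_unfold_supset:
  assumes u: "u \<in> U" and US: "U \<subseteq> S"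
  shows "insert u (reach \<Phi> (S - {u}) ((U - {u}) \<union> {w\<in>S - {u}. adj \<Phi> u w})) \<subseteq> reach \<Phi> S U"
    (is "insert u (reach \<Phi> ?S' ?W) \<subseteq> _")
proof
  have lift: "(adj_in \<Phi> S)\<^sup>*\<^sup>* a b" if "(adj_in \<Phi> ?S')\<^sup>*\<^sup>* a b" for a b
    using that by (induction rule: rtranclp_induct)
      (auto simp: adj_in_def intro: rtranclp.rtrancl_into_rtrancl)
  fix w assume "w \<in> insert u (reach \<Phi> ?S' ?W)"
  then consider "w = u" | u1 where "u1 \<in> ?W" "(adj_in \<Phi> ?S')\<^sup>*\<^sup>* u1 w"
    unfolding reach_def by blast
  then show "w \<in> reach \<Phi> S U"
  proof cases
    case 1
    then show ?thesis using u by (auto simp: reach_def)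
  next
    case 2
    then have path: "(adj_in \<Phi> S)\<^sup>*\<^sup>* u1 w" by (intro lift)
    show ?thesis
    proof (cases "u1 \<in> U")
      case True
      then show ?thesis using path by (auto simp: reach_def)
    next
      case False
      then have "adj_in \<Phi> S u u1" using 2(1) u US by (auto simp: adj_in_def)
      then have "(adj_in \<Phi> S)\<^sup>*\<^sup>* u w" using path by (rule converse_rtranclp_into_rtranclp)
      then show ?thesis using u by (auto simp: reach_def)
    qed
  qed
qed

lemma reach_unfold:
  assumes "u \<in> U" "U \<subseteq> S"
  shows "reach \<Phi> S U = insert u (reach \<Phi> (S - {u}) ((U - {u}) \<union> {w\<in>S - {u}. adj \<Phi> u w}))"
  using reach_unfold_subset[OF assms(1)] reach_unfold_supset[OF assms] by (rule subset_antisym)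

text \<open>The clauses of Y through u that also meet D in a second variable; these are the only
  clauses along which an exploration of the clause graph inside D can leave u.\<close>
definition link_clauses :: "('v \<times> 'b) set set \<Rightarrow> 'v set \<Rightarrow> 'v \<Rightarrow> ('v \<times> 'b) set set" where
  "link_clauses Y D u = {C\<in>Y. u \<in> fst ` C \<and> (\<exists>w\<in>D - {u}. w \<in> fst ` C)}"

definition subcritical :: "'v set \<Rightarrow> real \<Rightarrow> (('v \<times> 'b) set \<Rightarrow> real) \<Rightarrow> ('v \<times> 'b) set set \<Rightarrow> bool" where
  "subcritical D \<mu> q Y \<longleftrightarrow> finite Y \<and> (\<forall>C\<in>Y. 0 \<le> q C \<and> q C \<le> 1) \<and>
     (\<forall>C\<in>Y. card (fst ` C \<inter> D) \<le> 2) \<and> (\<forall>u\<in>D. sum q (link_clauses Y D u) \<le> \<mu>)"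

lemma subcritical_subset:
  assumes "subcritical D \<mu> q Y" "Y' \<subseteq> Y"
  shows "subcritical D \<mu> q Y'"
proof -
  have "sum q (link_clauses Y' D u) \<le> sum q (link_clauses Y D u)" for u
    using assms unfolding subcritical_def link_clauses_def by (intro sum_mono2) auto
  then show ?thesis using assms finite_subset[OF assms(2)] unfolding subcritical_def
    by (meson order_trans subsetD)
qed

lemma card_ge_3:
  assumes "finite X" "a \<in> X" "b \<in> X" "c \<in> X" "a \<noteq> b" "a \<noteq> c" "b \<noteq> c"
  shows "card X \<ge> 3"
proof -
  have "card {a, b, c} \<le> card X" using assms by (intro card_mono) auto
  then show ?thesis using assms by simp
qed

text \<open>Peeling off the clauses through an explored vertex u \<in> D: since every clause meets D
  in at most two variables, the clauses \<Phi>1 through u contribute only the neighbours of u,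
  and the rest of the exploration uses the remaining clauses \<Phi>2 only.\<close>
lemma reach_peel:
  assumes "finite D" and two: "\<forall>C\<in>Y. card (fst ` C \<inter> D) \<le> 2"
    and u: "u \<in> U" and US: "U \<subseteq> S" and SD: "S \<subseteq> D"
    and \<Phi>1: "\<Phi>1 \<subseteq> {C\<in>Y. u \<in> fst ` C}" and \<Phi>2: "\<Phi>2 \<subseteq> Y" "\<forall>C\<in>\<Phi>2. u \<notin> fst ` C"
  shows "reach (\<Phi>1 \<union> \<Phi>2) S U
       = insert u (reach \<Phi>2 (S - {u}) ((U - {u}) \<union> {w\<in>S - {u}. adj \<Phi>1 u w}))"
proof -
  have "adj (\<Phi>1 \<union> \<Phi>2) a b = adj \<Phi>2 a b" if ab: "a \<in> S - {u}" "b \<in> S - {u}" for a b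
  proof
    assume "adj (\<Phi>1 \<union> \<Phi>2) a b"
    then obtain C where C: "C \<in> \<Phi>1 \<union> \<Phi>2" "a \<in> fst ` C" "b \<in> fst ` C" "a \<noteq> b"
      unfolding adj_def by auto
    have "C \<notin> \<Phi>1"
    proof
      assume "C \<in> \<Phi>1"
      then have "C \<in> Y" "u \<in> fst ` C" using \<Phi>1 by auto
      moreover have "card (fst ` C \<inter> D) \<ge> 3"
        using C ab SD u US \<open>u \<in> fst ` C\<close> \<open>finite D\<close> by (intro card_ge_3[of _ a b u]) auto
      ultimately show False using two by fastforce
    qed
    then show "adj \<Phi>2 a b" using C unfolding adj_def by auto
  qed (auto simp: adj_def)
  then have "reach (\<Phi>1 \<union> \<Phi>2) (S - {u}) W = reach \<Phi>2 (S - {u}) W" for W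
    by (intro reach_cong) auto
  moreover have "{w\<in>S - {u}. adj (\<Phi>1 \<union> \<Phi>2) u w} = {w\<in>S - {u}. adj \<Phi>1 u w}"
    using \<Phi>2 unfolding adj_def by auto
  ultimately show ?thesis using reach_unfold[OF u US, of "\<Phi>1 \<union> \<Phi>2"] by simp
qed

lemma card_new_neighbours:
  fixes Y :: "('v \<times> 'b) set set"
  assumes "finite D" and two: "\<forall>C\<in>Y. card (fst ` C \<inter> D) \<le> 2"
    and u: "u \<in> D" and SD: "S \<subseteq> D" and \<Phi>1: "\<Phi>1 \<subseteq> {C\<in>Y. u \<in> fst ` C}" "finite \<Phi>1"
  shows "card {w\<in>S - {u}. adj \<Phi>1 u w} \<le> card (\<Phi>1 \<inter> link_clauses Y D u)"
proof -
  have "{w\<in>S - {u}. adj \<Phi>1 u w} \<subseteq> (\<Union>C\<in>\<Phi>1 \<inter> link_clauses Y D u. fst ` C \<inter> D - {u})"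
  proof
    fix w assume "w \<in> {w\<in>S - {u}. adj \<Phi>1 u w}"
    then obtain C where "C \<in> \<Phi>1" "u \<in> fst ` C" "w \<in> fst ` C" "w \<noteq> u" "w \<in> S"
      unfolding adj_def by auto
    then show "w \<in> (\<Union>C\<in>\<Phi>1 \<inter> link_clauses Y D u. fst ` C \<inter> D - {u})"
      using \<Phi>1 SD unfolding link_clauses_def by blast
  qed
  then have "card {w\<in>S - {u}. adj \<Phi>1 u w} \<le> card (\<Union>C\<in>\<Phi>1 \<inter> link_clauses Y D u. fst ` C \<inter> D - {u})"
    using \<open>finite D\<close> by (intro card_mono) auto
  also have "\<dots> \<le> (\<Sum>C\<in>\<Phi>1 \<inter> link_clauses Y D u. card (fst ` C \<inter> D - {u}))"
    by (rule card_UN_le) (use \<Phi>1 in auto)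
  also have "\<dots> \<le> (\<Sum>C\<in>\<Phi>1 \<inter> link_clauses Y D u. 1)"
  proof (intro sum_mono)
    fix C assume "C \<in> \<Phi>1 \<inter> link_clauses Y D u"
    then have "C \<in> Y" "u \<in> fst ` C \<inter> D" using u unfolding link_clauses_def by auto
    moreover have "finite (fst ` C \<inter> D)" using \<open>finite D\<close> by auto
    ultimately have "card (fst ` C \<inter> D - {u}) = card (fst ` C \<inter> D) - 1" "card (fst ` C \<inter> D) \<le> 2"
      using two by (auto simp: card_Diff_singleton)
    then show "card (fst ` C \<inter> D - {u}) \<le> 1" by linarith
  qed
  finally show ?thesis by simp
qed

lemma card_reach_peel:
  assumes "finite D" and two: "\<forall>C\<in>Y. card (fst ` C \<inter> D) \<le> 2"
    and u: "u \<in> U" and US: "U \<subseteq> S" and SD: "S \<subseteq> D"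
    and \<Phi>1: "\<Phi>1 \<subseteq> {C\<in>Y. u \<in> fst ` C}" and \<Phi>2: "\<Phi>2 \<subseteq> Y - {C\<in>Y. u \<in> fst ` C}"
  shows "card (reach (\<Phi>1 \<union> \<Phi>2) S U)
       = Suc (card (reach \<Phi>2 (S - {u}) ((U - {u}) \<union> {w\<in>S - {u}. adj \<Phi>1 u w})))"
proof -
  define W where "W = (U - {u}) \<union> {w\<in>S - {u}. adj \<Phi>1 u w}"
  have "reach \<Phi>2 (S - {u}) W \<subseteq> S - {u}"
    using reach_subset[of \<Phi>2 "S - {u}" W] US unfolding W_def by blast
  then have "finite (reach \<Phi>2 (S - {u}) W)" "u \<notin> reach \<Phi>2 (S - {u}) W"
    using \<open>finite D\<close> SD by (auto intro: finite_subset)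
  moreover have "reach (\<Phi>1 \<union> \<Phi>2) S U = insert u (reach \<Phi>2 (S - {u}) W)"
    unfolding W_def using \<Phi>1 \<Phi>2 by (intro reach_peel[OF \<open>finite D\<close> two u US SD]) auto
  ultimately show ?thesis unfolding W_def by simp
qed

lemma link_pgf_bound:
  assumes H: "subcritical D \<mu> q Y" and u: "u \<in> D" and G: "G \<ge> 1"
  shows "(\<Sum>\<Phi>1\<in>Pow {C\<in>Y. u \<in> fst ` C}.
            indep_wt q {C\<in>Y. u \<in> fst ` C} \<Phi>1 * G ^ card (\<Phi>1 \<inter> link_clauses Y D u))
         \<le> exp (\<mu> * (G - 1))"
proof -
  have fY: "finite Y" and q01: "\<forall>C\<in>Y. 0 \<le> q C" and \<mu>: "sum q (link_clauses Y D u) \<le> \<mu>"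
    using H u unfolding subcritical_def by auto
  have sub: "link_clauses Y D u \<subseteq> {C\<in>Y. u \<in> fst ` C}" unfolding link_clauses_def by auto
  have "(\<Sum>\<Phi>1\<in>Pow {C\<in>Y. u \<in> fst ` C}.
            indep_wt q {C\<in>Y. u \<in> fst ` C} \<Phi>1 * G ^ card (\<Phi>1 \<inter> link_clauses Y D u))
      = (\<Prod>C\<in>link_clauses Y D u. 1 + q C * (G - 1))"
    using fY sub by (intro indep_wt_pgf) auto
  also have "\<dots> \<le> exp ((G - 1) * sum q (link_clauses Y D u))"
    using fY q01 G by (intro prod_one_plus_le_exp) (auto simp: link_clauses_def)
  also have "\<dots> \<le> exp ((G - 1) * \<mu>)" using \<mu> G by (simp add: mult_left_mono)
  also have "\<dots> = exp (\<mu> * (G - 1))" by (simp add: mult.commute)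
  finally show ?thesis .
qed

text \<open>Induction on |S|: exploring u \<in> U costs a factor x, the clauses through u
  are independent of the rest and add new frontier vertices with generating function at most
  e^(\<mu>(G-1)), and the remaining exploration happens inside S - {u}.\<close>
lemma reach_moment:
  fixes Y :: "('v \<times> 'b) set set"
  assumes finD: "finite D" and G: "G \<ge> 1" and x: "x \<ge> 0" and xG: "x * exp (\<mu> * (G - 1)) \<le> G"
  shows "subcritical D \<mu> q Y \<Longrightarrow> S \<subseteq> D \<Longrightarrow> U \<subseteq> S \<Longrightarrow>
     (\<Sum>\<Phi>\<in>Pow Y. indep_wt q Y \<Phi> * x ^ card (reach \<Phi> S U)) \<le> G ^ card U"
proof (induction "card S" arbitrary: S U Y rule: less_induct)
  case less
  note H = less.prems(1)[unfolded subcritical_def]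
  have fY: "finite Y" and two: "\<forall>C\<in>Y. card (fst ` C \<inter> D) \<le> 2" using H by auto
  have fS: "finite S" using less.prems finD finite_subset by auto
  show ?case
  proof (cases "U = {}")
    case True
    then show ?thesis using indep_wt_total[OF fY, of q] by simp
  next
    case False
    then obtain u where u: "u \<in> U" by blast
    have uD: "u \<in> D" using u less.prems by auto
    define Y1 where "Y1 = {C\<in>Y. u \<in> fst ` C}"
    define Y2 where "Y2 = Y - Y1"
    define W where "W \<Phi>1 = (U - {u}) \<union> {w\<in>S - {u}. adj \<Phi>1 u w}" for \<Phi>1 :: "('v \<times> 'b) set set"
    have YY: "Y = Y1 \<union> Y2" "Y1 \<inter> Y2 = {}" "finite Y1" "finite Y2"
      using fY unfolding Y1_def Y2_def by auto
    have "card U > 0" using u finite_subset[OF less.prems(3) fS] by (auto simp: card_gt_0_iff)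
    then have U1: "card U = Suc (card U - 1)" by simp
    have step: "(\<Sum>\<Phi>2\<in>Pow Y2. indep_wt q Y2 \<Phi>2 * x ^ card (reach (\<Phi>1 \<union> \<Phi>2) S U))
        \<le> x * G ^ (card U - 1) * G ^ card (\<Phi>1 \<inter> link_clauses Y D u)" if \<Phi>1: "\<Phi>1 \<subseteq> Y1" for \<Phi>1
    proof -
      have "(\<Sum>\<Phi>2\<in>Pow Y2. indep_wt q Y2 \<Phi>2 * x ^ card (reach (\<Phi>1 \<union> \<Phi>2) S U))
          = x * (\<Sum>\<Phi>2\<in>Pow Y2. indep_wt q Y2 \<Phi>2 * x ^ card (reach \<Phi>2 (S - {u}) (W \<Phi>1)))"
        using card_reach_peel[OF finD two u less.prems(3,2)] \<Phi>1 unfolding W_def Y1_def Y2_def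
        by (simp add: sum_distrib_left algebra_simps)
      also have "\<dots> \<le> x * G ^ card (W \<Phi>1)"
      proof (intro mult_left_mono less.hyps)
        show "card (S - {u}) < card S" using fS u less.prems(3) by (meson card_Diff1_less subsetD)
        show "subcritical D \<mu> q Y2" using subcritical_subset[OF less.prems(1)] YY by auto
      qed (use less.prems x in \<open>auto simp: W_def\<close>)
      also have "\<dots> \<le> x * G ^ ((card U - 1) + card (\<Phi>1 \<inter> link_clauses Y D u))"
      proof (intro mult_left_mono power_increasing)
        have "card (W \<Phi>1) \<le> card (U - {u}) + card {w\<in>S - {u}. adj \<Phi>1 u w}"
          unfolding W_def by (rule card_Un_le)
        moreover have "card {w\<in>S - {u}. adj \<Phi>1 u w} \<le> card (\<Phi>1 \<inter> link_clauses Y D u)"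
          using \<Phi>1 finite_subset[OF \<Phi>1 YY(3)] less.prems(2) uD
          by (intro card_new_neighbours[OF finD two]) (auto simp: Y1_def)
        ultimately show "card (W \<Phi>1) \<le> card U - 1 + card (\<Phi>1 \<inter> link_clauses Y D u)" using u by simp
      qed (use G x in auto)
      finally show ?thesis by (simp add: power_add mult.assoc)
    qed
    have "(\<Sum>\<Phi>\<in>Pow Y. indep_wt q Y \<Phi> * x ^ card (reach \<Phi> S U))
        = (\<Sum>\<Phi>1\<in>Pow Y1. indep_wt q Y1 \<Phi>1 *
             (\<Sum>\<Phi>2\<in>Pow Y2. indep_wt q Y2 \<Phi>2 * x ^ card (reach (\<Phi>1 \<union> \<Phi>2) S U)))"
      unfolding YY(1) by (rule indep_wt_split[OF YY(2-4)])
    also have "\<dots> \<le> (\<Sum>\<Phi>1\<in>Pow Y1. indep_wt q Y1 \<Phi>1 *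
                      (x * G ^ (card U - 1) * G ^ card (\<Phi>1 \<inter> link_clauses Y D u)))"
      using step H by (intro sum_mono mult_left_mono indep_wt_nonneg) (auto simp: Y1_def)
    also have "\<dots> = x * G ^ (card U - 1) *
        (\<Sum>\<Phi>1\<in>Pow Y1. indep_wt q Y1 \<Phi>1 * G ^ card (\<Phi>1 \<inter> link_clauses Y D u))"
      by (simp add: sum_distrib_left algebra_simps)
    also have "\<dots> \<le> x * G ^ (card U - 1) * exp (\<mu> * (G - 1))"
      using link_pgf_bound[OF less.prems(1) uD G] G x unfolding Y1_def by (intro mult_left_mono) auto
    also have "\<dots> = G ^ (card U - 1) * (x * exp (\<mu> * (G - 1)))" by (simp add: algebra_simps)
    also have "\<dots> \<le> G ^ (card U - 1) * G" using xG G by (intro mult_left_mono) auto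
    also have "\<dots> = G ^ card U" by (subst (2) U1) (simp add: mult.commute)
    finally show ?thesis .
  qed
qed

definition switch :: "nat set \<Rightarrow> (nat \<Rightarrow> bool) \<Rightarrow> (nat \<Rightarrow> bool) \<Rightarrow> nat \<Rightarrow> bool" where
  "switch T A B = (\<lambda>i. if i \<in> T then B i else A i)"

definition closed_in :: "('v \<times> 'b) set set \<Rightarrow> 'v set \<Rightarrow> 'v set \<Rightarrow> bool" where
  "closed_in \<Phi> D T \<longleftrightarrow> (\<forall>a\<in>T. \<forall>b\<in>D. adj \<Phi> a b \<longrightarrow> b \<in> T)"

text \<open>If A and B satisfy \<Phi> and T is a union of components of the clause graph on the set D where
  A and B differ, then flipping A to B on T also satisfies \<Phi>: each clause either meets T, and
  then sees only B-values on D, or does not, and then sees only A-values.\<close>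
lemma sat_switch:
  assumes D: "D = {i. i < n \<and> A i \<noteq> B i}" and cl: "closed_in \<Phi> D T"
    and \<Phi>: "\<Phi> \<subseteq> clauses n k" and sA: "sat A \<Phi>" and sB: "sat B \<Phi>"
  shows "sat (switch T A B) \<Phi>"
  unfolding sat_def
proof
  fix C assume C: "C \<in> \<Phi>"
  then have "C \<subseteq> {0..<n} \<times> UNIV" using \<Phi> unfolding clauses_def by auto
  then have Cn: "fst l < n" if "l \<in> C" for l using that by auto
  show "card {l\<in>C. lit_true (switch T A B) l} = 1"
  proof (cases "\<exists>l\<in>C. fst l \<in> T")
    case True
    then obtain l0 where l0: "l0 \<in> C" "fst l0 \<in> T" by blast
    have "lit_true (switch T A B) l = lit_true B l" if l: "l \<in> C" for l
    proof (cases "fst l \<in> T")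
      case False
      have "fst l \<notin> D"
      proof
        assume "fst l \<in> D"
        moreover have "adj \<Phi> (fst l0) (fst l)" using C l0 l False unfolding adj_def by auto
        ultimately show False using cl l0 False unfolding closed_in_def by blast
      qed
      then show ?thesis using Cn[OF l] False D by (simp add: lit_true_def switch_def)
    qed (simp add: lit_true_def switch_def)
    then have "{l\<in>C. lit_true (switch T A B) l} = {l\<in>C. lit_true B l}" by auto
    then show ?thesis using sB C unfolding sat_def by simp
  next
    case False
    then have "{l\<in>C. lit_true (switch T A B) l} = {l\<in>C. lit_true A l}"
      by (auto simp: lit_true_def switch_def)
    then show ?thesis using sA C unfolding sat_def by simp
  qed
qed

lemma connected_refl:
  "A \<in> assignments n \<Longrightarrow> sat A \<Phi> \<Longrightarrow> connected n \<Phi> l A A"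
  unfolding connected_def by (intro exI[of _ "[A]"]) auto

lemma connected_extend:
  assumes AX: "connected n \<Phi> l A X" and Y: "Y \<in> assignments n" "sat Y \<Phi>"
    and XY: "real (hamming n X Y) \<le> l"
  shows "connected n \<Phi> l A Y"
proof -
  obtain xs where xs: "xs \<noteq> []" "hd xs = A" "last xs = X" "\<forall>Z\<in>set xs. Z \<in> assignments n \<and> sat Z \<Phi>"
    "\<forall>i < length xs - 1. real (hamming n (xs ! i) (xs ! Suc i)) \<le> l"
    using AX unfolding connected_def by blast
  have "real (hamming n ((xs @ [Y]) ! i) ((xs @ [Y]) ! Suc i)) \<le> l" if i: "i < length xs" for i
  proof (cases "i < length xs - 1")
    case True
    then have "Suc i < length xs" by arith
    then show ?thesis using xs(5) True by (simp add: nth_append)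
  next
    case False
    then have "i = length xs - 1" using i by auto
    then show ?thesis using xs(1,3) XY i by (simp add: nth_append last_conv_nth)
  qed
  then show ?thesis using xs Y unfolding connected_def by (intro exI[of _ "xs @ [Y]"]) auto
qed

lemma reach_closed_subset:
  assumes "closed_in \<Phi> D T" "v \<in> T"
  shows "reach \<Phi> D {v} \<subseteq> T"
proof
  fix w assume "w \<in> reach \<Phi> D {v}"
  then have "(adj_in \<Phi> D)\<^sup>*\<^sup>* v w" unfolding reach_def by auto
  then show "w \<in> T"
  proof (induction rule: rtranclp_induct)
    case (step y z)
    then show ?case using assms(1) unfolding adj_in_def closed_in_def by blast
  qed (rule assms(2))
qed

lemma closed_in_remove_component:
  assumes cl: "closed_in \<Phi> D T" and TD: "T \<subseteq> D"
  shows "closed_in \<Phi> D (T - reach \<Phi> D {v})"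
  unfolding closed_in_def
proof (intro ballI impI)
  fix a b assume a: "a \<in> T - reach \<Phi> D {v}" and b: "b \<in> D" and ab: "adj \<Phi> a b"
  have "b \<notin> reach \<Phi> D {v}"
  proof
    assume "b \<in> reach \<Phi> D {v}"
    moreover have "adj_in \<Phi> D b a" using a b adj_sym[OF ab] TD unfolding adj_in_def by blast
    ultimately have "a \<in> reach \<Phi> D {v}"
      unfolding reach_def by (auto intro: rtranclp.rtrancl_into_rtrancl)
    then show False using a by auto
  qed
  moreover have "b \<in> T" using cl a b ab unfolding closed_in_def by auto
  ultimately show "b \<in> T - reach \<Phi> D {v}" by auto
qed

lemma hamming_switch_remove:
  assumes D: "D = {i. i < n \<and> A i \<noteq> B i}" and KT: "K \<subseteq> T" and TD: "T \<subseteq> D"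
  shows "hamming n (switch (T - K) A B) (switch T A B) = card K"
proof -
  have "{i. i < n \<and> switch (T - K) A B i \<noteq> switch T A B i} = K"
    using KT TD unfolding D switch_def by auto
  then show ?thesis unfolding hamming_def by simp
qed

text \<open>If every component of the clause graph on D has at most l vertices, then A can be moved
  to its switch on any closed T \<subseteq> D by flipping one component at a time.\<close>
lemma connected_switch:
  assumes D: "D = {i. i < n \<and> A i \<noteq> B i}"
    and \<Phi>: "\<Phi> \<subseteq> clauses n k" and sA: "sat A \<Phi>" and sB: "sat B \<Phi>"
    and aA: "A \<in> assignments n" and aB: "B \<in> assignments n"
    and small: "\<forall>v\<in>D. real (card (reach \<Phi> D {v})) \<le> l"
  shows "T \<subseteq> D \<Longrightarrow> closed_in \<Phi> D T \<Longrightarrow> connected n \<Phi> l A (switch T A B)"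
proof (induction "card T" arbitrary: T rule: less_induct)
  case less
  have "finite D" unfolding D by auto
  then have fT: "finite T" using less.prems(1) by (rule finite_subset[rotated])
  show ?case
  proof (cases "T = {}")
    case True
    then show ?thesis using connected_refl[OF aA sA] by (simp add: switch_def)
  next
    case False
    then obtain v where v: "v \<in> T" by blast
    define K where "K = reach \<Phi> D {v}"
    have KT: "K \<subseteq> T" unfolding K_def by (rule reach_closed_subset[OF less.prems(2) v])
    have "v \<in> K" unfolding K_def reach_def by auto
    then have "card (T - K) < card T" using fT v KT by (intro psubset_card_mono) auto
    then have "connected n \<Phi> l A (switch (T - K) A B)"
      using less closed_in_remove_component[OF less.prems(2,1)] unfolding K_def by auto
    moreover have "switch T A B \<in> assignments n"
      using aA aB by (auto simp: assignments_def switch_def)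
    moreover have "sat (switch T A B) \<Phi>" by (rule sat_switch[OF D less.prems(2) \<Phi> sA sB])
    moreover have "real (hamming n (switch (T - K) A B) (switch T A B)) \<le> l"
      using hamming_switch_remove[OF D KT less.prems(1)] small v less.prems(1)
      unfolding K_def by auto
    ultimately show ?thesis by (rule connected_extend)
  qed
qed

lemma connected_if_small_components:
  assumes D: "D = {i. i < n \<and> A i \<noteq> B i}"
    and \<Phi>: "\<Phi> \<subseteq> clauses n k" and sA: "sat A \<Phi>" and sB: "sat B \<Phi>"
    and aA: "A \<in> assignments n" and aB: "B \<in> assignments n"
    and small: "\<forall>v\<in>D. real (card (reach \<Phi> D {v})) \<le> l"
  shows "connected n \<Phi> l A B"
proof -
  have "switch D A B = B"
    using aA aB unfolding D switch_def assignments_def by (auto simp: fun_eq_iff)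
  moreover have "closed_in \<Phi> D D" unfolding closed_in_def by auto
  ultimately show ?thesis using connected_switch[OF assms order_refl] by simp
qed

text \<open>The clauses that are 1-in-k satisfied by both A and B: conditioned on A and B being
  solutions, the instance is exactly a random subset of these clauses.\<close>
definition both_sat :: "nat \<Rightarrow> nat \<Rightarrow> (nat \<Rightarrow> bool) \<Rightarrow> (nat \<Rightarrow> bool) \<Rightarrow> (nat \<times> bool) set set" where
  "both_sat n k A B =
     {C\<in>clauses n k. card {l\<in>C. lit_true A l} = 1 \<and> card {l\<in>C. lit_true B l} = 1}"

definition lit_wt :: "real \<Rightarrow> nat \<times> bool \<Rightarrow> real" where
  "lit_wt \<epsilon> l = (if snd l then 1 - \<epsilon> else \<epsilon>)"

lemma finite_clauses: "finite (clauses n k)"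
proof -
  have "clauses n k \<subseteq> Pow ({0..<n} \<times> (UNIV :: bool set))" unfolding clauses_def by auto
  then show ?thesis by (rule finite_subset) auto
qed

lemma finite_clause: "C \<in> clauses n k \<Longrightarrow> finite C"
  unfolding clauses_def using finite_subset[of C "{0..<n} \<times> (UNIV :: bool set)"] by auto

lemma finite_both_sat: "finite (both_sat n k A B)"
  using finite_clauses unfolding both_sat_def by auto

lemma clause_prob_nonneg: "0 \<le> p \<Longrightarrow> 0 \<le> \<epsilon> \<Longrightarrow> \<epsilon> \<le> 1 \<Longrightarrow> 0 \<le> clause_prob p \<epsilon> C"
  unfolding clause_prob_def by auto

lemma clause_prob_le_one:
  assumes "0 \<le> p" "p \<le> 1" "0 \<le> \<epsilon>" "\<epsilon> \<le> 1"
  shows "clause_prob p \<epsilon> C \<le> 1"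
proof -
  have "\<epsilon> ^ card {l\<in>C. \<not> snd l} \<le> 1" "(1 - \<epsilon>) ^ card {l\<in>C. snd l} \<le> 1"
    using assms by (auto intro: power_le_one)
  then have "\<epsilon> ^ card {l\<in>C. \<not> snd l} * (1 - \<epsilon>) ^ card {l\<in>C. snd l} \<le> 1"
    using assms by (intro mult_le_one) auto
  then have "p * (\<epsilon> ^ card {l\<in>C. \<not> snd l} * (1 - \<epsilon>) ^ card {l\<in>C. snd l}) \<le> p"
    using assms(1) by (rule mult_left_le)
  then show ?thesis using assms(2) unfolding clause_prob_def by (simp add: mult.assoc)
qed

lemma clause_prob_eq_prod:
  assumes "finite C"
  shows "clause_prob p \<epsilon> C = p * (\<Prod>l\<in>C. lit_wt \<epsilon> l)"
proof -
  have "(\<Prod>l\<in>C. lit_wt \<epsilon> l) = (\<Prod>l\<in>C \<inter> {l. snd l}. 1 - \<epsilon>) * (\<Prod>l\<in>C \<inter> - {l. snd l}. \<epsilon>)"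
    unfolding lit_wt_def using assms by (simp add: prod.If_cases)
  also have "\<dots> = (1 - \<epsilon>) ^ card {l\<in>C. snd l} * \<epsilon> ^ card {l\<in>C. \<not> snd l}"
    by (simp add: Int_def Collect_conj_eq[symmetric] Compl_eq)
  finally show ?thesis unfolding clause_prob_def by (simp add: algebra_simps)
qed

text \<open>A clause satisfied by both A and B contains at most two variables on which they differ:
  on such a variable every literal is true under A or under B.\<close>
lemma card_diff_vars_le_2:
  assumes C: "C \<in> both_sat n k A B" and D: "D = {i. i < n \<and> A i \<noteq> B i}"
  shows "card (fst ` C \<inter> D) \<le> 2"
proof -
  have fC: "finite C" using C finite_clause unfolding both_sat_def by auto
  have "fst ` C \<inter> D \<subseteq> fst ` ({l\<in>C. lit_true A l} \<union> {l\<in>C. lit_true B l})"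
    using D unfolding lit_true_def by force
  then have "card (fst ` C \<inter> D) \<le> card (fst ` ({l\<in>C. lit_true A l} \<union> {l\<in>C. lit_true B l}))"
    using fC by (intro card_mono) auto
  also have "\<dots> \<le> card ({l\<in>C. lit_true A l} \<union> {l\<in>C. lit_true B l})"
    using fC by (intro card_image_le) auto
  also have "\<dots> \<le> card {l\<in>C. lit_true A l} + card {l\<in>C. lit_true B l}" by (rule card_Un_le)
  also have "\<dots> = 2" using C unfolding both_sat_def by simp
  finally show ?thesis .
qed

lemma both_sat_other_lits:
  assumes C: "C \<in> both_sat n k A B" and l1: "l1 \<in> C" "lit_true A l1"
    and l2: "l2 \<in> C" "lit_true B l2" and l: "l \<in> C" "l \<noteq> l1" "l \<noteq> l2"
  shows "\<not> lit_true A l \<and> \<not> lit_true B l"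
proof -
  have "card {l\<in>C. lit_true A l} = 1" "card {l\<in>C. lit_true B l} = 1"
    using C unfolding both_sat_def by auto
  then obtain a b where "{l\<in>C. lit_true A l} = {a}" "{l\<in>C. lit_true B l} = {b}"
    by (metis card_1_singletonE)
  then have "{l\<in>C. lit_true A l} = {l1}" "{l\<in>C. lit_true B l} = {l2}" using l1 l2 by auto
  then show ?thesis using l by blast
qed

text \<open>Counting: a clause satisfied by both A and B that contains the A-true literal l1 and the
  B-true literal l2 is determined by its k - 2 remaining variables, which lie in the set E where
  A and B agree (each appearing with the sign that makes it false).\<close>
lemma card_pair_clauses:
  assumes E: "E = {i. i < n \<and> A i = B i}"
    and l1: "lit_true A l1" and l2: "lit_true B l2" and ne: "fst l1 \<noteq> fst l2"
  shows "card {C\<in>both_sat n k A B. l1 \<in> C \<and> l2 \<in> C} \<le> card E choose (k - 2)"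
proof -
  define Z where "Z = {C\<in>both_sat n k A B. l1 \<in> C \<and> l2 \<in> C}"
  define g where "g i = (i, \<not> A i)" for i
  define F where "F V = {l1, l2} \<union> g ` V" for V
  have finE: "finite E" unfolding E by auto
  have "C \<in> F ` {V. V \<subseteq> E \<and> card V = k - 2}" if C: "C \<in> Z" for C
  proof -
    define R where "R = C - {l1, l2}"
    have CY: "C \<in> clauses n k" "l1 \<in> C" "l2 \<in> C" using C unfolding Z_def both_sat_def by auto
    then have inj: "inj_on fst C" and card: "card C = k" and Cn: "C \<subseteq> {0..<n} \<times> UNIV"
      unfolding clauses_def by auto
    have other: "g (fst l) = l \<and> fst l \<in> E" if "l \<in> R" for l
      using both_sat_other_lits[of C n k A B l1 l2 l] C that Cn l1 l2
      unfolding Z_def R_def E g_def lit_true_def by (cases l) auto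
    have "g ` fst ` R = R" using other by (force simp: image_image)
    then have "C = F (fst ` R)" using CY unfolding F_def R_def by auto
    moreover have "card (fst ` R) = k - 2"
    proof -
      have "l1 \<noteq> l2" using ne by auto
      then have "card R = k - 2" using CY card unfolding R_def by (simp add: card_Diff_subset)
      moreover have "inj_on fst R" using inj unfolding R_def by (rule inj_on_subset) auto
      ultimately show ?thesis by (simp add: card_image)
    qed
    moreover have "fst ` R \<subseteq> E" using other by auto
    ultimately show ?thesis by auto
  qed
  then have "card Z \<le> card (F ` {V. V \<subseteq> E \<and> card V = k - 2})"
    using finE by (intro card_mono) auto
  also have "\<dots> \<le> card {V. V \<subseteq> E \<and> card V = k - 2}" by (rule card_image_le) (use finE in auto)
  also have "\<dots> = card E choose (k - 2)" by (rule n_subsets[OF finE])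
  finally show ?thesis unfolding Z_def .
qed

text \<open>Their total inclusion probability: each has weight at most
  p \<cdot> w(l1) \<cdot> w(l2) \<cdot> (1 - \<epsilon>)^(k-2), as every literal weight is at most 1 - \<epsilon>.\<close>
lemma pair_clauses_weight:
  assumes E: "E = {i. i < n \<and> A i = B i}"
    and l1: "lit_true A l1" and l2: "lit_true B l2" and ne: "fst l1 \<noteq> fst l2"
    and p: "0 \<le> p" and eps: "0 \<le> \<epsilon>" "\<epsilon> \<le> 1/2"
  shows "(\<Sum>C\<in>{C\<in>both_sat n k A B. l1 \<in> C \<and> l2 \<in> C}. clause_prob p \<epsilon> C)
    \<le> real (card E choose (k - 2)) * (p * lit_wt \<epsilon> l1 * lit_wt \<epsilon> l2 * (1 - \<epsilon>) ^ (k - 2))"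
proof -
  define Z where "Z = {C\<in>both_sat n k A B. l1 \<in> C \<and> l2 \<in> C}"
  have wt: "0 \<le> lit_wt \<epsilon> l" "lit_wt \<epsilon> l \<le> 1 - \<epsilon>" for l using eps unfolding lit_wt_def by auto
  have each: "clause_prob p \<epsilon> C \<le> p * lit_wt \<epsilon> l1 * lit_wt \<epsilon> l2 * (1 - \<epsilon>) ^ (k - 2)"
    if C: "C \<in> Z" for C
  proof -
    have CY: "C \<in> clauses n k" "{l1, l2} \<subseteq> C" "l1 \<noteq> l2"
      using C ne unfolding Z_def both_sat_def by auto
    have fC: "finite C" using CY(1) by (rule finite_clause)
    have "card C = k" using CY(1) unfolding clauses_def by auto
    then have card: "card (C - {l1, l2}) = k - 2" using card_Diff_subset[OF _ CY(2)] CY(3) by simp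
    have "(\<Prod>l\<in>C. lit_wt \<epsilon> l) = (\<Prod>l\<in>C - {l1, l2}. lit_wt \<epsilon> l) * (\<Prod>l\<in>{l1, l2}. lit_wt \<epsilon> l)"
      using CY fC by (intro prod.subset_diff) auto
    also have "\<dots> = (\<Prod>l\<in>C - {l1, l2}. lit_wt \<epsilon> l) * (lit_wt \<epsilon> l1 * lit_wt \<epsilon> l2)"
      using CY(3) by simp
    also have "\<dots> \<le> (\<Prod>l\<in>C - {l1, l2}. 1 - \<epsilon>) * (lit_wt \<epsilon> l1 * lit_wt \<epsilon> l2)"
      using wt by (intro mult_right_mono prod_mono) auto
    also have "\<dots> = (1 - \<epsilon>) ^ (k - 2) * (lit_wt \<epsilon> l1 * lit_wt \<epsilon> l2)" using card by simp
    finally show ?thesis using p clause_prob_eq_prod[OF fC]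
      by (simp add: mult_left_mono algebra_simps)
  qed
  have "(\<Sum>C\<in>Z. clause_prob p \<epsilon> C) \<le> real (card Z) * (p * lit_wt \<epsilon> l1 * lit_wt \<epsilon> l2 * (1 - \<epsilon>) ^ (k - 2))"
    using each by (rule sum_bounded_above)
  also have "\<dots> \<le> real (card E choose (k - 2)) * (p * lit_wt \<epsilon> l1 * lit_wt \<epsilon> l2 * (1 - \<epsilon>) ^ (k - 2))"
    using card_pair_clauses[OF E l1 l2 ne, of k] p wt eps unfolding Z_def
    by (intro mult_right_mono) auto
  finally show ?thesis unfolding Z_def .
qed

lemma both_sat_pair_cases:
  assumes C: "C \<in> both_sat n k A B" and D: "D = {i. i < n \<and> A i \<noteq> B i}"
    and uw: "u \<in> fst ` C" "w \<in> fst ` C" "u \<in> D" "w \<in> D" "u \<noteq> w"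
  shows "(u, A u) \<in> C \<and> (w, \<not> A w) \<in> C \<or> (w, A w) \<in> C \<and> (u, \<not> A u) \<in> C"
proof -
  obtain a b where ab: "(u, a) \<in> C" "(w, b) \<in> C" using uw by force
  have "card {l\<in>C. lit_true A l} = 1" "card {l\<in>C. lit_true B l} = 1"
    using C unfolding both_sat_def by auto
  then obtain x y where x: "{l\<in>C. lit_true A l} = {x}" and y: "{l\<in>C. lit_true B l} = {y}"
    by (metis card_1_singletonE)
  have BA: "B u = (\<not> A u)" "B w = (\<not> A w)" using uw D by auto
  have "\<not> (a = A u \<and> b = A w)"
  proof
    assume "a = A u \<and> b = A w"
    then have "(u, a) \<in> {l\<in>C. lit_true A l}" "(w, b) \<in> {l\<in>C. lit_true A l}"
      using ab by (auto simp: lit_true_def)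
    then have "(u, a) = x \<and> (w, b) = x" unfolding x by simp
    then show False using uw(5) by auto
  qed
  moreover have "\<not> (a = B u \<and> b = B w)"
  proof
    assume "a = B u \<and> b = B w"
    then have "(u, a) \<in> {l\<in>C. lit_true B l}" "(w, b) \<in> {l\<in>C. lit_true B l}"
      using ab by (auto simp: lit_true_def)
    then have "(u, a) = y \<and> (w, b) = y" unfolding y by simp
    then show False using uw(5) by auto
  qed
  ultimately show ?thesis using ab BA by auto
qed

text \<open>The pair of cross terms is controlled by the constant in the definition of r:
  w(a)w(\<not>b) + w(b)w(\<not>a) is 2\<epsilon>(1-\<epsilon>) or \<epsilon>^2 + (1-\<epsilon>)^2.\<close>
lemma lit_wt_cross_bound:
  assumes "0 \<le> \<epsilon>" "\<epsilon> \<le> 1/2"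
  shows "lit_wt \<epsilon> (u, a) * lit_wt \<epsilon> (w, \<not> b) + lit_wt \<epsilon> (w, b) * lit_wt \<epsilon> (u, \<not> a)
     \<le> max (4 * \<epsilon> * (1 - \<epsilon>)) (\<epsilon>^2 + (1 - \<epsilon>)^2)"
proof -
  have "2 * (\<epsilon> * (1 - \<epsilon>)) \<le> 4 * \<epsilon> * (1 - \<epsilon>)" using assms by auto
  then show ?thesis unfolding lit_wt_def
    by (cases a; cases b) (auto simp: le_max_iff_disj power2_eq_square algebra_simps)
qed

lemma sum_UN_le:
  fixes f :: "'a \<Rightarrow> real"
  assumes "finite I" "\<And>i. i \<in> I \<Longrightarrow> finite (A i)" "\<And>x. 0 \<le> f x"
  shows "sum f (\<Union>i\<in>I. A i) \<le> (\<Sum>i\<in>I. sum f (A i))"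
  using assms
proof (induction I rule: finite_induct)
  case (insert i I)
  have "sum f (\<Union>j\<in>insert i I. A j) \<le> sum f (A i) + sum f (\<Union>j\<in>I. A j)"
    using insert by (simp add: sum_Un sum_nonneg)
  then show ?case using insert by simp
qed simp

text \<open>Expected D-degree of a vertex u \<in> D in the graph of both_sat clauses: at most
  |D| \<cdot> C(|E|, k-2) \<cdot> p \<cdot> max(...) \<cdot> (1-\<epsilon>)^(k-2), summing over the second D-variable w and
  the two ways the A-true and B-true literals can sit on {u, w}.\<close>
lemma link_weight_bound:
  assumes D: "D = {i. i < n \<and> A i \<noteq> B i}" and E: "E = {i. i < n \<and> A i = B i}"
    and u: "u \<in> D" and p: "0 \<le> p" and eps: "0 \<le> \<epsilon>" "\<epsilon> \<le> 1/2"
  shows "sum (clause_prob p \<epsilon>) (link_clauses (both_sat n k A B) D u)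
    \<le> real (card D) * (real (card E choose (k - 2)) *
         (p * max (4 * \<epsilon> * (1 - \<epsilon>)) (\<epsilon>^2 + (1 - \<epsilon>)^2) * (1 - \<epsilon>) ^ (k - 2)))"
proof -
  define M where "M = max (4 * \<epsilon> * (1 - \<epsilon>)) (\<epsilon>^2 + (1 - \<epsilon>)^2)"
  define Y where "Y = both_sat n k A B"
  define P where "P w = {C\<in>Y. (u, A u) \<in> C \<and> (w, \<not> A w) \<in> C} \<union> {C\<in>Y. (w, A w) \<in> C \<and> (u, \<not> A u) \<in> C}" for w
  define bnd where "bnd = real (card E choose (k - 2)) * (p * M * (1 - \<epsilon>) ^ (k - 2))"
  have finD: "finite D" unfolding D by auto
  have nn: "0 \<le> clause_prob p \<epsilon> C" for C using clause_prob_nonneg p eps by auto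
  have fP: "finite (P w)" for w using finite_both_sat unfolding P_def Y_def by auto
  have pair: "sum (clause_prob p \<epsilon>) (P w) \<le> bnd" if w: "w \<in> D - {u}" for w
  proof -
    have lits: "lit_true A (u, A u)" "lit_true B (w, \<not> A w)" "lit_true A (w, A w)" "lit_true B (u, \<not> A u)"
      using u w D by (auto simp: lit_true_def)
    have "sum (clause_prob p \<epsilon>) (P w)
        \<le> sum (clause_prob p \<epsilon>) {C\<in>Y. (u, A u) \<in> C \<and> (w, \<not> A w) \<in> C}
          + sum (clause_prob p \<epsilon>) {C\<in>Y. (w, A w) \<in> C \<and> (u, \<not> A u) \<in> C}"
      unfolding P_def using finite_both_sat nn by (simp add: Y_def sum_Un sum_nonneg)
    also have "\<dots> \<le> real (card E choose (k - 2)) * (p * (1 - \<epsilon>) ^ (k - 2) *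
         (lit_wt \<epsilon> (u, A u) * lit_wt \<epsilon> (w, \<not> A w) + lit_wt \<epsilon> (w, A w) * lit_wt \<epsilon> (u, \<not> A u)))"
      using pair_clauses_weight[OF E lits(1,2) _ p eps, of k] pair_clauses_weight[OF E lits(3,4) _ p eps, of k] w
      unfolding Y_def by (simp add: algebra_simps)
    also have "\<dots> \<le> real (card E choose (k - 2)) * (p * (1 - \<epsilon>) ^ (k - 2) * M)"
      unfolding M_def using lit_wt_cross_bound[OF eps, of u "A u" w "A w"] p eps
      by (intro mult_left_mono) auto
    also have "\<dots> = bnd" by (simp add: bnd_def algebra_simps)
    finally show ?thesis .
  qed
  have "link_clauses Y D u \<subseteq> (\<Union>w\<in>D - {u}. P w)"
  proof
    fix C assume "C \<in> link_clauses Y D u"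
    then obtain w where w: "C \<in> Y" "u \<in> fst ` C" "w \<in> D - {u}" "w \<in> fst ` C"
      unfolding link_clauses_def by auto
    then have "C \<in> P w"
      using both_sat_pair_cases[of C n k A B D u w] D u unfolding P_def Y_def by auto
    then show "C \<in> (\<Union>w\<in>D - {u}. P w)" using w(3) by blast
  qed
  then have "sum (clause_prob p \<epsilon>) (link_clauses Y D u) \<le> sum (clause_prob p \<epsilon>) (\<Union>w\<in>D - {u}. P w)"
    using fP finD nn by (intro sum_mono2) auto
  also have "\<dots> \<le> (\<Sum>w\<in>D - {u}. sum (clause_prob p \<epsilon>) (P w))"
    using finD fP nn by (intro sum_UN_le) auto
  also have "\<dots> \<le> real (card (D - {u})) * bnd" using pair by (rule sum_bounded_above)
  also have "\<dots> \<le> real (card D) * bnd"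
  proof (intro mult_right_mono)
    have "0 \<le> M" unfolding M_def by (simp add: le_max_iff_disj)
    then show "0 \<le> bnd" unfolding bnd_def using p eps by simp
  qed (use finD in \<open>auto simp: card_mono\<close>)
  finally show ?thesis unfolding bnd_def M_def Y_def .
qed

text \<open>k! C(n,k) = n (n-1) \<dots> (n-k+1) \<ge> (n-k)^k.\<close>
lemma fact_choose_lower:
  assumes "k \<le> n"
  shows "real (n - k) ^ k \<le> fact k * real (n choose k)"
proof -
  have "(n - k) ^ k = (\<Prod>i\<in>{n - k..<n}. n - k)" using assms by simp
  also have "\<dots> \<le> (\<Prod>i\<in>{n - k..<n}. Suc i)" by (intro prod_mono) auto
  finally have "real (n - k) ^ k \<le> real (\<Prod>i\<in>{n - k..<n}. Suc i)"
    by (metis of_nat_le_iff of_nat_power)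
  also have "\<dots> = fact n / fact (n - k)"
    by (simp add: fact_split[OF assms])
  also have "\<dots> = fact k * real (n choose k)" by (rule fact_binomial[OF assms, symmetric])
  finally show ?thesis .
qed

text \<open>For n \<ge> k^2 (1+c)/(1-c) the ratio n^k / (k! C(n,k)) is close enough to 1 that
  c n^k / (k! C(n,k)) \<le> (1+c)/2 < 1 (by Bernoulli's inequality).\<close>
lemma density_ratio_bound:
  fixes c :: real
  assumes nk: "k < n" and c: "0 < c" "c < 1" and big: "real n \<ge> real k ^ 2 * (1 + c) / (1 - c)"
  shows "c * real n ^ k / (fact k * real (n choose k)) \<le> (1 + c) / 2"
proof -
  define N where "N = real n"
  define K where "K = real k"
  have Npos: "N > 0" using nk unfolding N_def by auto
  have h: "K ^ 2 * (1 + c) \<le> N * (1 - c)" using big c unfolding N_def K_def by (simp add: field_simps)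
  then have "K ^ 2 < N" using c Npos
    by (smt (verit, best) mult_less_cancel_left_pos mult_right_mono zero_le_power2)
  then have pos: "0 < 1 - K ^ 2 / N" using Npos by (simp add: field_simps)
  have "1 + real k * (- (K / N)) \<le> (1 + - (K / N)) ^ k"
    using nk Npos unfolding N_def K_def by (intro Bernoulli_inequality) simp
  then have bern: "1 - K ^ 2 / N \<le> (1 - K / N) ^ k" unfolding K_def by (simp add: power2_eq_square)
  have "c * N ^ k / (fact k * real (n choose k)) \<le> c * N ^ k / real (n - k) ^ k"
    using fact_choose_lower[of k n] nk c Npos by (intro divide_left_mono) auto
  also have "\<dots> = c / (1 - K / N) ^ k"
  proof -
    have "real (n - k) = N * (1 - K / N)" using nk Npos unfolding N_def K_def by (simp add: field_simps)
    then show ?thesis using Npos by (simp add: power_mult_distrib)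
  qed
  also have "\<dots> \<le> c / (1 - K ^ 2 / N)" using bern pos c by (intro divide_left_mono) auto
  also have "\<dots> \<le> (1 + c) / 2"
  proof -
    have "2 * c \<le> (1 + c) * (1 - K ^ 2 / N)" using h Npos c by (simp add: field_simps)
    then show ?thesis using pos by (simp add: field_simps)
  qed
  finally show ?thesis unfolding N_def .
qed

lemma degree_bound_numeric:
  fixes n d e k :: nat and c \<epsilon> M p :: real
  assumes k: "k \<ge> 3" and nk: "n > k" and c: "0 < c" "c < 1" and M: "M > 0"
    and p: "p * real (n choose k) = (1 / M) * (c / real (k choose 2)) * real n"
    and de: "d + e = n"
    and ov: "2 * ((real e / real n) * (1 - \<epsilon>)) ^ (k - 2) \<le> 1" and eps: "\<epsilon> \<le> 1"
    and big: "real n \<ge> real k ^ 2 * (1 + c) / (1 - c)"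
  shows "real d * (real (e choose (k - 2)) * (p * M * (1 - \<epsilon>) ^ (k - 2))) \<le> (1 + c) / 2"
proof -
  define N where "N = real n"
  define Q where "Q = c * N / (real (k choose 2) * real (n choose k))"
  have Npos: "N > 0" using nk unfolding N_def by auto
  have Q0: "Q \<ge> 0" unfolding Q_def using c Npos by simp
  have pM: "p * M = Q"
    using p M nk k unfolding Q_def N_def by (simp add: field_simps)
  have k2: "k = Suc (Suc (k - 2))" using k by simp
  have "real (e choose (k - 2)) * fact (k - 2) \<le> real e ^ (k - 2)"
    using binomial_fact_pow[of e "k - 2"] by (metis of_nat_fact of_nat_le_iff of_nat_mult of_nat_power)
  then have "real (e choose (k - 2)) \<le> real e ^ (k - 2) / fact (k - 2)" by (simp add: field_simps)
  then have "real (e choose (k - 2)) * (1 - \<epsilon>) ^ (k - 2) \<le> real e ^ (k - 2) / fact (k - 2) * (1 - \<epsilon>) ^ (k - 2)"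
    using eps by (intro mult_right_mono) auto
  also have "\<dots> = (real e * (1 - \<epsilon>)) ^ (k - 2) / fact (k - 2)" by (simp add: power_mult_distrib)
  also have "\<dots> \<le> N ^ (k - 2) / (2 * fact (k - 2))"
  proof -
    have "2 * (real e * (1 - \<epsilon>)) ^ (k - 2) = 2 * ((real e / N) * (1 - \<epsilon>)) ^ (k - 2) * N ^ (k - 2)"
      using Npos by (simp add: power_mult_distrib[symmetric] field_simps)
    also have "\<dots> \<le> N ^ (k - 2)" using ov Npos unfolding N_def by (simp add: mult_left_le_one_le)
    finally show ?thesis by (simp add: field_simps)
  qed
  finally have binom: "real (e choose (k - 2)) * (1 - \<epsilon>) ^ (k - 2) \<le> N ^ (k - 2) / (2 * fact (k - 2))" .
  have "real d * (real (e choose (k - 2)) * (p * M * (1 - \<epsilon>) ^ (k - 2)))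
      = real d * Q * (real (e choose (k - 2)) * (1 - \<epsilon>) ^ (k - 2))"
    by (simp only: pM) (simp add: algebra_simps)
  also have "\<dots> \<le> N * Q * (N ^ (k - 2) / (2 * fact (k - 2)))"
    using de Q0 binom eps unfolding N_def by (intro mult_mono) auto
  also have "\<dots> = c * N ^ k / (real (k choose 2) * 2 * fact (k - 2) * real (n choose k))"
    unfolding Q_def by (subst (4) k2) (simp add: field_simps)
  also have "real (k choose 2) * 2 * fact (k - 2) = (fact k :: real)"
    using binomial_fact[of 2 k, where 'a=real] k by (simp add: field_simps)
  also have "c * N ^ k / (fact k * real (n choose k)) \<le> (1 + c) / 2"
    unfolding N_def by (rule density_ratio_bound[OF nk c big])
  finally show ?thesis .
qed

text \<open>Conditioning on A and B being solutions: the instance restricted to both_sat is then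
  distributed as independent clause choices, and no other clause is present.\<close>
lemma cond_prob_le_both_sat:
  assumes q01: "\<forall>C\<in>clauses n k. 0 \<le> clause_prob p \<epsilon> C \<and> clause_prob p \<epsilon> C \<le> 1"
  shows "cond_prob_inst n k p \<epsilon> E (\<lambda>\<Phi>. sat A \<Phi> \<and> sat B \<Phi>)
     \<le> (\<Sum>\<Phi>\<in>{\<Phi>\<in>Pow (both_sat n k A B). E \<Phi>}. indep_wt (clause_prob p \<epsilon>) (both_sat n k A B) \<Phi>)"
proof -
  define X where "X = clauses n k"
  define Y where "Y = both_sat n k A B"
  define q where "q = clause_prob p \<epsilon>"
  define rest where "rest = (\<Prod>C\<in>X - Y. 1 - q C)"
  define P where "P = (\<Sum>\<Phi>\<in>{\<Phi>\<in>Pow Y. E \<Phi>}. indep_wt q Y \<Phi>)"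
  have YX: "Y \<subseteq> X" unfolding X_def Y_def both_sat_def by auto
  have fX: "finite X" unfolding X_def by (rule finite_clauses)
  have fY: "finite Y" using YX fX finite_subset by auto
  have sat_iff: "(\<Phi> \<subseteq> X \<and> sat A \<Phi> \<and> sat B \<Phi>) \<longleftrightarrow> \<Phi> \<in> Pow Y" for \<Phi>
    unfolding X_def Y_def both_sat_def sat_def by auto
  have inst: "instance_prob n k p \<epsilon> \<Phi> = indep_wt q Y \<Phi> * rest" if "\<Phi> \<subseteq> Y" for \<Phi>
  proof -
    have "X - \<Phi> = (Y - \<Phi>) \<union> (X - Y)" using that YX by auto
    then have "(\<Prod>C\<in>X - \<Phi>. 1 - q C) = (\<Prod>C\<in>Y - \<Phi>. 1 - q C) * rest"
      unfolding rest_def using fX fY by (simp only:) (rule prod.union_disjoint, auto)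
    then show ?thesis unfolding instance_prob_def indep_wt_def X_def[symmetric] q_def[symmetric] by simp
  qed
  have num: "prob_inst n k p \<epsilon> (\<lambda>\<Phi>. E \<Phi> \<and> (sat A \<Phi> \<and> sat B \<Phi>)) = P * rest"
  proof -
    have "{\<Phi>. \<Phi> \<subseteq> X \<and> (E \<Phi> \<and> (sat A \<Phi> \<and> sat B \<Phi>))} = {\<Phi>\<in>Pow Y. E \<Phi>}" using sat_iff by blast
    then show ?thesis unfolding prob_inst_def X_def[symmetric] P_def sum_distrib_right
      using inst by (intro sum.cong) auto
  qed
  have den: "prob_inst n k p \<epsilon> (\<lambda>\<Phi>. sat A \<Phi> \<and> sat B \<Phi>) = rest"
  proof -
    have "{\<Phi>. \<Phi> \<subseteq> X \<and> (sat A \<Phi> \<and> sat B \<Phi>)} = Pow Y" using sat_iff by blast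
    then have "prob_inst n k p \<epsilon> (\<lambda>\<Phi>. sat A \<Phi> \<and> sat B \<Phi>) = (\<Sum>\<Phi>\<in>Pow Y. indep_wt q Y \<Phi>) * rest"
      unfolding prob_inst_def X_def[symmetric] sum_distrib_right using inst by (intro sum.cong) auto
    then show ?thesis using indep_wt_total[OF fY] by simp
  qed
  have "0 \<le> P" unfolding P_def using q01 YX
    by (intro sum_nonneg indep_wt_nonneg) (auto simp: q_def X_def)
  then have "P * rest / rest \<le> P" by (cases "rest = 0") auto
  then show ?thesis unfolding cond_prob_inst_def num den P_def q_def Y_def .
qed

text \<open>Markov's inequality on the exponential moments: if (A, B) is not l-connected, some
  component of the clause graph on D has more than l vertices, an event of probability at most
  \<Sum>_{v\<in>D} E[x^|component(v)|] / x^l \<le> |D| G / x^l.\<close>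
lemma disconnected_weight_bound:
  assumes D: "D = {i. i < n \<and> A i \<noteq> B i}" and aA: "A \<in> assignments n" and aB: "B \<in> assignments n"
    and H: "subcritical D \<mu> q (both_sat n k A B)"
    and G: "G \<ge> 1" and x: "x \<ge> 1" and xG: "x * exp (\<mu> * (G - 1)) \<le> G"
  shows "(\<Sum>\<Phi>\<in>{\<Phi>\<in>Pow (both_sat n k A B). \<not> connected n \<Phi> l A B}. indep_wt q (both_sat n k A B) \<Phi>)
      \<le> real (card D) * G / x powr l"
proof -
  define Y where "Y = both_sat n k A B"
  define f where "f \<Phi> = (\<Sum>v\<in>D. x ^ card (reach \<Phi> D {v}) / x powr l)" for \<Phi> :: "(nat \<times> bool) set set"
  have finD: "finite D" unfolding D by auto
  have fY: "finite Y" unfolding Y_def by (rule finite_both_sat)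
  have wt: "0 \<le> indep_wt q Y \<Phi>" if "\<Phi> \<in> Pow Y" for \<Phi>
    using H that unfolding subcritical_def Y_def by (intro indep_wt_nonneg) auto
  have xp: "x powr l > 0" using x by simp
  have f0: "0 \<le> f \<Phi>" for \<Phi> unfolding f_def using x xp by (intro sum_nonneg) auto
  have f1: "1 \<le> f \<Phi>" if \<Phi>: "\<Phi> \<in> Pow Y" and nc: "\<not> connected n \<Phi> l A B" for \<Phi>
  proof -
    have "\<Phi> \<subseteq> clauses n k" "sat A \<Phi>" "sat B \<Phi>"
      using \<Phi> unfolding Y_def both_sat_def sat_def by auto
    then have "\<not> (\<forall>v\<in>D. real (card (reach \<Phi> D {v})) \<le> l)"
      using connected_if_small_components[OF D _ _ _ aA aB] nc by blast
    then obtain v where v: "v \<in> D" "l < real (card (reach \<Phi> D {v}))" by (auto simp: not_le)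
    have "x powr l \<le> x ^ card (reach \<Phi> D {v})"
      using x v by (simp add: powr_realpow[symmetric] powr_mono)
    then have "1 \<le> x ^ card (reach \<Phi> D {v}) / x powr l" using xp by simp
    also have "\<dots> \<le> f \<Phi>" unfolding f_def using finD v x xp by (intro member_le_sum) auto
    finally show ?thesis .
  qed
  have "(\<Sum>\<Phi>\<in>{\<Phi>\<in>Pow Y. \<not> connected n \<Phi> l A B}. indep_wt q Y \<Phi>)
      \<le> (\<Sum>\<Phi>\<in>{\<Phi>\<in>Pow Y. \<not> connected n \<Phi> l A B}. indep_wt q Y \<Phi> * f \<Phi>)"
  proof (intro sum_mono)
    fix \<Phi> assume "\<Phi> \<in> {\<Phi>\<in>Pow Y. \<not> connected n \<Phi> l A B}"
    then show "indep_wt q Y \<Phi> \<le> indep_wt q Y \<Phi> * f \<Phi>"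
      using f1 wt mult_left_mono[of 1 "f \<Phi>" "indep_wt q Y \<Phi>"] by auto
  qed
  also have "\<dots> \<le> (\<Sum>\<Phi>\<in>Pow Y. indep_wt q Y \<Phi> * f \<Phi>)"
    using fY wt f0 by (intro sum_mono2) auto
  also have "\<dots> = (\<Sum>v\<in>D. (\<Sum>\<Phi>\<in>Pow Y. indep_wt q Y \<Phi> * x ^ card (reach \<Phi> D {v})) / x powr l)"
    unfolding f_def by (simp add: sum_distrib_left sum_divide_distrib sum.swap[of _ D] algebra_simps)
  also have "\<dots> \<le> (\<Sum>v\<in>D. G / x powr l)"
  proof (intro sum_mono divide_right_mono)
    fix v assume "v \<in> D"
    then show "(\<Sum>\<Phi>\<in>Pow Y. indep_wt q Y \<Phi> * x ^ card (reach \<Phi> D {v})) \<le> G"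
      using reach_moment[OF finD G _ xG, of q Y D "{v}"] H x unfolding Y_def by auto
  qed (use xp in auto)
  finally show ?thesis unfolding Y_def by simp
qed

text \<open>For \<mu> < 1 the growth condition x e^(\<mu>(G-1)) \<le> G of reach_moment has a solution with
  x > 1: take G = 1 + \<eta> and x = G / e^(\<mu>\<eta>) with \<eta> = (1-\<mu>)/2, since ln(1+\<eta>) \<ge> \<eta> - \<eta>^2.\<close>
lemma growth_constants:
  fixes \<mu> :: real
  assumes "0 < \<mu>" "\<mu> < 1"
  obtains G x where "G \<ge> 1" "x > 1" "x * exp (\<mu> * (G - 1)) \<le> G"
proof
  define \<eta> where "\<eta> = (1 - \<mu>) / 2"
  have \<eta>: "0 < \<eta>" "\<eta> \<le> 1" unfolding \<eta>_def using assms by auto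
  show "1 + \<eta> \<ge> 1" using \<eta> by simp
  show "(1 + \<eta>) / exp (\<mu> * \<eta>) * exp (\<mu> * (1 + \<eta> - 1)) \<le> 1 + \<eta>" by simp
  have "\<eta> - \<eta>^2 \<le> ln (1 + \<eta>)" using ln_one_plus_pos_lower_bound[OF _ \<eta>(2)] \<eta> by simp
  moreover have "\<eta> - \<eta>^2 - \<mu> * \<eta> = \<eta> * \<eta>" unfolding \<eta>_def by (simp add: power2_eq_square field_simps)
  moreover have "ln ((1 + \<eta>) / exp (\<mu> * \<eta>)) = ln (1 + \<eta>) - \<mu> * \<eta>" using \<eta> by (simp add: ln_div)
  ultimately have "ln ((1 + \<eta>) / exp (\<mu> * \<eta>)) > 0" using \<eta> by (smt (verit) mult_pos_pos)
  then show "(1 + \<eta>) / exp (\<mu> * \<eta>) > 1" using \<eta> by (simp add: ln_gt_zero_imp_gt_one)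
qed

lemma edge_prob_bounds:
  fixes p r :: real
  assumes k: "k \<ge> 2" and nk: "n > k" and r: "r \<ge> 0" and big: "real n \<ge> r * real k ^ 2"
    and p: "p * real (n choose k) = r * real n"
  shows "0 \<le> p" "p \<le> 1"
proof -
  have B: "real (n choose k) > 0" using nk by simp
  then have "p = r * real n / real (n choose k)" using p by (simp add: field_simps)
  then show "0 \<le> p" using r by simp
  have "real n * (r * real k ^ 2) \<le> real n * real n" using big by (intro mult_left_mono) auto
  then have "r * real n \<le> (real n / real k) ^ 2" using k by (simp add: field_simps power2_eq_square)
  also have "(real n / real k) ^ 2 \<le> (real n / real k) ^ k" using nk k by (intro power_increasing) auto
  also have "\<dots> \<le> real (n choose k)" using binomial_ge_n_over_k_pow_k[of k n] nk by simp
  finally have "r * real n \<le> real (n choose k)" .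
  then have "p * real (n choose k) \<le> 1 * real (n choose k)" using p by simp
  then show "p \<le> 1" using B by (simp only: mult_le_cancel_right)
qed

lemma subcritical_both_sat:
  fixes c \<epsilon> r p :: real
  assumes k: "k \<ge> 3" and nk: "n > k" and c: "0 < c" "c < 1" and eps: "0 \<le> \<epsilon>" "\<epsilon> \<le> 1/2"
    and r: "r = (1 / max (4 * \<epsilon> * (1 - \<epsilon>)) (\<epsilon>^2 + (1 - \<epsilon>)^2)) * (c / real (k choose 2))"
    and p: "p * real (n choose k) = r * real n" "0 \<le> p" "p \<le> 1"
    and ov: "2 * (overlap n A B * (1 - \<epsilon>)) ^ (k - 2) \<le> 1"
    and big: "real n \<ge> real k ^ 2 * (1 + c) / (1 - c)"
    and D: "D = {i. i < n \<and> A i \<noteq> B i}"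
  shows "subcritical D ((1 + c) / 2) (clause_prob p \<epsilon>) (both_sat n k A B)"
  unfolding subcritical_def
proof (intro conjI ballI)
  define E where "E = {i. i < n \<and> A i = B i}"
  define M where "M = max (4 * \<epsilon> * (1 - \<epsilon>)) (\<epsilon>^2 + (1 - \<epsilon>)^2)"
  have M0: "M > 0" unfolding M_def using eps by (simp add: less_max_iff_disj add_nonneg_pos)
  have pM: "p * real (n choose k) = (1 / M) * (c / real (k choose 2)) * real n"
    using p(1) unfolding r M_def by simp
  have "D \<union> E = {..<n}" "D \<inter> E = {}" "finite D" "finite E" unfolding D E_def by auto
  then have de: "card D + card E = n" by (metis card_Un_disjoint card_lessThan)
  have ovE: "2 * ((real (card E) / real n) * (1 - \<epsilon>)) ^ (k - 2) \<le> 1"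
    using ov unfolding overlap_def E_def .
  fix u assume "u \<in> D"
  then have "sum (clause_prob p \<epsilon>) (link_clauses (both_sat n k A B) D u)
      \<le> real (card D) * (real (card E choose (k - 2)) * (p * M * (1 - \<epsilon>) ^ (k - 2)))"
    unfolding M_def by (rule link_weight_bound[OF D E_def _ p(2) eps])
  also have "\<dots> \<le> (1 + c) / 2"
    using eps by (intro degree_bound_numeric[OF k nk c M0 pM de ovE _ big]) auto
  finally show "sum (clause_prob p \<epsilon>) (link_clauses (both_sat n k A B) D u) \<le> (1 + c) / 2" .
qed (use finite_both_sat card_diff_vars_le_2[OF _ D] clause_prob_nonneg clause_prob_le_one p eps in auto)

text \<open>The bound for a single large n: with l = (3 / ln x) ln n we get x^l = n^3, so the
  conditional probability of not being l-connected is at most |D| G / n^3 \<le> G / n^2 < 1/n.\<close>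
lemma cond_prob_disconnected_lt:
  fixes c \<epsilon> r G x :: real and p :: real
  assumes k: "k \<ge> 3" and eps: "0 \<le> \<epsilon>" "\<epsilon> \<le> 1/2" and c: "0 < c" "c < 1"
    and r: "r = (1 / max (4 * \<epsilon> * (1 - \<epsilon>)) (\<epsilon>^2 + (1 - \<epsilon>)^2)) * (c / real (k choose 2))"
    and p: "p * real (n choose k) = r * real n"
    and G: "G \<ge> 1" and x: "x > 1" and xG: "x * exp ((1 + c) / 2 * (G - 1)) \<le> G"
    and nk: "n > k" and big: "real n \<ge> real k ^ 2 * (1 + c) / (1 - c)" "real n \<ge> r * real k ^ 2"
      "real n > G"
    and AB: "A \<in> assignments n" "B \<in> assignments n" "2 * (overlap n A B * (1 - \<epsilon>)) ^ (k - 2) \<le> 1"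
  shows "cond_prob_inst n k p \<epsilon> (\<lambda>\<Phi>. \<not> connected n \<Phi> (3 / ln x * ln (real n)) A B)
           (\<lambda>\<Phi>. sat A \<Phi> \<and> sat B \<Phi>) < 1 / real n"
proof -
  define D where "D = {i. i < n \<and> A i \<noteq> B i}"
  define l where "l = 3 / ln x * ln (real n)"
  have npos: "real n > 0" using nk by simp
  have "r \<ge> 0" unfolding r using c eps by (simp add: le_max_iff_disj)
  then have p01: "0 \<le> p" "p \<le> 1" using edge_prob_bounds[OF _ nk _ big(2) p] k by auto
  have lnx: "ln x > 0" using x by simp
  have "subcritical D ((1 + c) / 2) (clause_prob p \<epsilon>) (both_sat n k A B)"
    by (rule subcritical_both_sat[OF k nk c eps r p p01 AB(3) big(1) D_def])
  note sub = this
  have "\<forall>C\<in>clauses n k. 0 \<le> clause_prob p \<epsilon> C \<and> clause_prob p \<epsilon> C \<le> 1"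
    using clause_prob_nonneg clause_prob_le_one p01 eps by auto
  then have "cond_prob_inst n k p \<epsilon> (\<lambda>\<Phi>. \<not> connected n \<Phi> l A B) (\<lambda>\<Phi>. sat A \<Phi> \<and> sat B \<Phi>)
      \<le> (\<Sum>\<Phi>\<in>{\<Phi>\<in>Pow (both_sat n k A B). \<not> connected n \<Phi> l A B}.
            indep_wt (clause_prob p \<epsilon>) (both_sat n k A B) \<Phi>)"
    by (rule cond_prob_le_both_sat)
  also have "\<dots> \<le> real (card D) * G / x powr l"
    by (rule disconnected_weight_bound[OF D_def AB(1,2) sub G less_imp_le[OF x] xG])
  also have "x powr l = real n ^ 3"
  proof -
    have "x powr l = exp (3 * ln (real n))" unfolding l_def powr_def using x lnx by simp
    also have "\<dots> = real n powr 3" using npos by (simp add: powr_def)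
    also have "\<dots> = real n ^ 3" using npos by (simp add: powr_realpow)
    finally show ?thesis .
  qed
  also have "real (card D) * G / real n ^ 3 \<le> real n * G / real n ^ 3"
    using G npos card_mono[of "{..<n}" D] unfolding D_def
    by (intro divide_right_mono mult_right_mono) auto
  also have "real n * G / real n ^ 3 < 1 / real n"
    using big(3) npos by (simp add: field_simps power3_eq_cube power2_eq_square)
  finally show ?thesis unfolding l_def .
qed

theorem theorem2:
  fixes k :: nat and \<epsilon> c r :: real and p :: "nat \<Rightarrow> real"
  assumes k: "k \<ge> 3"
    and eps: "0 \<le> \<epsilon>" "\<epsilon> \<le> 1/2"
    and c: "0 < c" "c < 1"
    and r_def: "r = (1 / max (4 * \<epsilon> * (1 - \<epsilon>)) (\<epsilon>^2 + (1 - \<epsilon>)^2)) * (c / real (k choose 2))"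
    and p_def: "\<And>n. n \<ge> k \<Longrightarrow> p n * real (n choose k) = r * real n"
  shows "\<exists>lam>0. \<forall>A B :: nat \<Rightarrow> nat \<Rightarrow> bool.
           (\<forall>n. A n \<in> assignments n \<and> B n \<in> assignments n \<and>
                 2 * (overlap n (A n) (B n) * (1 - \<epsilon>)) ^ (k - 2) \<le> 1) \<longrightarrow>
           (\<forall>\<^sub>F n in sequentially.
              cond_prob_inst n k (p n) \<epsilon>
                (\<lambda>\<Phi>. \<not> connected n \<Phi> (lam * ln (real n)) (A n) (B n))
                (\<lambda>\<Phi>. sat (A n) \<Phi> \<and> sat (B n) \<Phi>) < 1 / real n)"
proof -
  have "0 < (1 + c) / 2" "(1 + c) / 2 < 1" using c by auto
  then obtain G x where G: "G \<ge> 1" and x: "x > 1" and xG: "x * exp ((1 + c) / 2 * (G - 1)) \<le> G"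
    by (rule growth_constants)
  define N0 where "N0 = max (max (real k ^ 2 * (1 + c) / (1 - c)) (r * real k ^ 2)) G"
  have large: "\<forall>\<^sub>F n in sequentially. k < n \<and> N0 < real n"
    using eventually_gt_at_top[of k] eventually_gt_at_top[of "nat \<lceil>N0\<rceil>"]
    by eventually_elim linarith
  have "\<forall>\<^sub>F n in sequentially.
          cond_prob_inst n k (p n) \<epsilon> (\<lambda>\<Phi>. \<not> connected n \<Phi> (3 / ln x * ln (real n)) (A n) (B n))
            (\<lambda>\<Phi>. sat (A n) \<Phi> \<and> sat (B n) \<Phi>) < 1 / real n"
    if AB: "\<forall>n. A n \<in> assignments n \<and> B n \<in> assignments n \<and>
              2 * (overlap n (A n) (B n) * (1 - \<epsilon>)) ^ (k - 2) \<le> 1" for A B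
    using large
  proof eventually_elim
    case (elim n)
    then show ?case using AB p_def[of n] unfolding N0_def
      by (intro cond_prob_disconnected_lt[OF k eps c r_def _ G x xG]) auto
  qed
  moreover have "3 / ln x > 0" using x by simp
  ultimately show ?thesis by blast
qed

end
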